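(* Let $\mathsf{F}$ be a fixed plane forest with $m\ge 0$ vertices and $h$ components. Choose a plane tree with $k$ vertices uniformly at random. Let $\rho_k(\mathsf{F}^+)$ be the number of non-root vertices $v$ such that: <ul> <li>$F(v)$ has at least $m$ vertices, and</li> <li>the subforest induced by the last $m$ vertices of $F(v)$ in preorder is isomorphic to $\mathsf{F}$,</li> </ul> divided by $k$. Then $\rho_k(\mathsf{F}^+)$ is concentrated (as $k\to\infty$) at $$\mu_\rho(\mathsf{F}^+)=\frac{1}{2^{2m-h}}.$$
   Context: A plane tree is a rooted tree in which the children of each vertex are linearly ordered (left to right). A plane forest is a finite (possibly empty) sequence of plane trees; isomorphism of plane forests preserves the order of components and of children. For a non-root vertex $v$ of a plane tree, $F(v)$ denotes the plane forest whose components are the subtrees rooted at those siblings of $v$ that precede $v$ in the left-to-right order of the children of the parent of $v$, listed in that order. The preorder of a plane forest lists each vertex before its descendants, visiting components in order and children from left to right. The subforest induced by a set of vertices inherits the plane structure: components are ordered by preorder, and children keep their order. A sequence of random variables $(\xi_k)$ is concentrated at a constant $\mu$ if for every $\varepsilon>0$ there is $K$ such that $\mathbb{P}[|\xi_k-\mu|\le\varepsilon]>1-\varepsilon$ for all $k\ge K$. *)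

theory Defs
  imports Complex_Main
begin

text \<open>Plane trees: a vertex with an ordered list of subtrees. Plane forests are lists
of plane trees; isomorphism of plane trees/forests is equality.\<close>
datatype ptree = Node "ptree list"

fun children :: "ptree \<Rightarrow> ptree list" where
  "children (Node cs) = cs"

fun nverts :: "ptree \<Rightarrow> nat" where
  "nverts (Node cs) = 1 + sum_list (map nverts cs)"

definition fsize :: "ptree list \<Rightarrow> nat" where
  "fsize ts = sum_list (map nverts ts)"

text \<open>Vertices of a tree are addressed by paths of child indices; the root is [].\<close>
inductive is_pos :: "ptree \<Rightarrow> nat list \<Rightarrow> bool" where
  root: "is_pos t []"
| child: "i < length cs \<Longrightarrow> is_pos (cs ! i) p \<Longrightarrow> is_pos (Node cs) (i # p)"

fun subtree_at :: "ptree \<Rightarrow> nat list \<Rightarrow> ptree" where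
  "subtree_at t [] = t"
| "subtree_at (Node cs) (i # p) = subtree_at (cs ! i) p"

text \<open>F(v) for a non-root vertex v at path p: the subtrees of the siblings of v
preceding v, in order.\<close>
definition Fv :: "ptree \<Rightarrow> nat list \<Rightarrow> ptree list" where
  "Fv t p = take (last p) (children (subtree_at t (butlast p)))"

text \<open>Subforest induced by the vertices whose preorder index satisfies P
(indices start at off). Each selected vertex becomes the child of its nearest
selected ancestor; the order (preorder) is preserved.\<close>
fun induce :: "(nat \<Rightarrow> bool) \<Rightarrow> nat \<Rightarrow> ptree list \<Rightarrow> ptree list" where
  "induce P off [] = []"
| "induce P off (Node cs # ts) =
     (if P off then [Node (induce P (Suc off) cs)] else induce P (Suc off) cs)
     @ induce P (off + nverts (Node cs)) ts"

definition last_sub :: "nat \<Rightarrow> ptree list \<Rightarrow> ptree list" where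
  "last_sub m f = induce (\<lambda>i. fsize f - m \<le> i) 0 f"

definition plane_trees :: "nat \<Rightarrow> ptree set" where
  "plane_trees k = {t. nverts t = k}"

definition rho :: "ptree list \<Rightarrow> ptree \<Rightarrow> real" where
  "rho F t = real (card {p. is_pos t p \<and> p \<noteq> [] \<and>
        fsize (Fv t p) \<ge> fsize F \<and> last_sub (fsize F) (Fv t p) = F}) / real (nverts t)"

end

theory Submission
  imports Defs "HOL-Library.Sublist"
begin

text \<open>Encode a plane tree by its Lukasiewicz word, the preorder list of out-degrees. For a
  non-root vertex v, the word of F(v) is the end of the prefix of the tree word preceding v, and
  taking the last m vertices of F(v) amounts to taking the last m letters. Because the word a of
  the forest F is itself a forest word, the count of vertices in the statement equals the number
  of proper nonempty prefixes of the tree word that end with a. Up to an error of m + 1 this is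
  the number of cyclic occurrences of a, which is invariant under rotation. By the cycle lemma
  every word of length k and letter sum k - 1 has exactly one rotation that is a tree word, so
  averaging over trees is averaging over all such words. There the first two moments of the
  number of cyclic occurrences are explicit binomial coefficients: with m = |a| and s = sum a,
  the probability that a given window carries a is asymptotically 2^-(m+s), and m + s = 2m - h.
  Hence the variance of the normalised count tends to 0, and Chebyshev's inequality gives the
  concentration.\<close>

section \<open>Lukasiewicz words\<close>

fun luk :: "ptree \<Rightarrow> nat list" where
  "luk (Node cs) = length cs # concat (map luk cs)"

definition luk_forest :: "ptree list \<Rightarrow> nat list" where
  "luk_forest f = concat (map luk f)"

lemma luk_forest_simps [simp]:
  "luk_forest [] = []"
  "luk_forest (t # f) = luk t @ luk_forest f"
  "luk_forest (f @ g) = luk_forest f @ luk_forest g"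
  by (simp_all add: luk_forest_def)

lemma luk_Node [simp]: "luk (Node cs) = length cs # luk_forest cs"
  by (simp add: luk_forest_def)

declare luk.simps [simp del]

lemma luk_forest_Cons_Node: "luk_forest (Node cs # f) = length cs # luk_forest (cs @ f)"
  by simp

lemma length_luk: "length (luk t) = nverts t"
proof (induction t)
  case (Node cs)
  then have "length (luk_forest cs) = sum_list (map nverts cs)"
    by (induction cs) auto
  then show ?case by simp
qed

lemma length_luk_forest: "length (luk_forest f) = fsize f"
  by (induction f) (simp_all add: fsize_def length_luk)

definition excess :: "nat list \<Rightarrow> int" where
  "excess xs = (\<Sum>x\<leftarrow>xs. int x - 1)"

lemma excess_simps [simp]:
  "excess [] = 0"
  "excess (x # xs) = int x - 1 + excess xs"
  "excess (xs @ ys) = excess xs + excess ys"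
  by (simp_all add: excess_def)

lemma excess_eq: "excess xs = int (sum_list xs) - int (length xs)"
  by (induction xs) auto

text \<open>The Lukasiewicz word of a forest with h trees: the letters minus one have partial sums
  above -h until they reach -h at the very end.\<close>
definition forest_word :: "nat \<Rightarrow> nat list \<Rightarrow> bool" where
  "forest_word h w \<longleftrightarrow> (\<forall>j<length w. excess (take j w) > - int h) \<and> excess w = - int h"

lemma forest_word_Nil [simp]: "forest_word h [] \<longleftrightarrow> h = 0"
  by (simp add: forest_word_def)

lemma forest_word_Cons: "forest_word h (x # w) \<longleftrightarrow> 1 \<le> h \<and> forest_word (x + h - 1) w"
proof -
  have "(\<forall>j<length (x # w). excess (take j (x # w)) > - int h) \<longleftrightarrow>
      1 \<le> h \<and> (\<forall>j<length w. excess (take j w) > - int (x + h - 1))"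
    by (auto simp: less_Suc_eq_0_disj of_nat_diff)
  then show ?thesis
    by (auto simp: forest_word_def)
qed

lemma forest_word_append:
  assumes "forest_word h u" and "forest_word h' v"
  shows "forest_word (h + h') (u @ v)"
  using assms
proof (induction u arbitrary: h)
  case (Cons x u)
  then have h: "1 \<le> h" and "forest_word (x + h - 1) u"
    by (simp_all add: forest_word_Cons)
  then have "forest_word (x + h - 1 + h') (u @ v)"
    using Cons by blast
  moreover have "x + h - 1 + h' = x + (h + h') - 1"
    using h by simp
  ultimately show ?case
    using h by (simp add: forest_word_Cons)
qed simp

lemma forest_word_luk: "forest_word 1 (luk t)"
proof (induction t)
  case (Node cs)
  then have "forest_word (length cs) (luk_forest cs)"
  proof (induction cs)
    case (Cons c cs)
    then show ?case
      using forest_word_append[of 1 "luk c" "length cs"] by simp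
  qed simp
  then show ?case by (simp add: forest_word_Cons)
qed

lemma forest_word_luk_forest: "forest_word (length f) (luk_forest f)"
  by (induction f) (auto dest: forest_word_append[OF forest_word_luk])

lemma forest_word_unique: "forest_word h w \<Longrightarrow> forest_word h' w \<Longrightarrow> h = h'"
  by (simp add: forest_word_def)

lemma forest_word_imp_luk_forest:
  assumes "forest_word h w"
  obtains f where "length f = h" and "luk_forest f = w"
  using assms
proof (induction w arbitrary: h thesis)
  case Nil
  then show ?case by simp
next
  case (Cons x w)
  then have h: "1 \<le> h" and "forest_word (x + h - 1) w"
    by (simp_all add: forest_word_Cons)
  then obtain f where f: "length f = x + h - 1" "luk_forest f = w"
    using Cons.IH by blast
  have "luk_forest (Node (take x f) # drop x f) = x # w"
    using f h by (simp flip: luk_forest_simps(3))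
  moreover have "length (Node (take x f) # drop x f) = h"
    using f h by simp
  ultimately show ?case
    using Cons.prems(1) by blast
qed

lemma luk_forest_inj:
  assumes "luk_forest f = luk_forest g"
  shows "f = g"
proof -
  have "length f = length g"
    using forest_word_luk_forest[of f] forest_word_luk_forest[of g] assms
    by (metis forest_word_unique)
  with assms show ?thesis
  proof (induction "fsize f" arbitrary: f g rule: less_induct)
    case less
    show ?case
    proof (cases f)
      case Nil
      with less.prems show ?thesis by simp
    next
      case (Cons t f')
      obtain cs where t: "t = Node cs" by (cases t)
      obtain cs' g' where g: "g = Node cs' # g'"
        using less.prems Cons by (metis length_Suc_conv ptree.exhaust)
      have "length cs = length cs'" and word: "luk_forest (cs @ f') = luk_forest (cs' @ g')"
        using less.prems(1) unfolding Cons t g luk_forest_Cons_Node by simp_all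
      moreover have "fsize (cs @ f') < fsize f"
        by (simp add: Cons t fsize_def)
      ultimately have "cs @ f' = cs' @ g'"
        using less.hyps less.prems(2) Cons g by simp
      with \<open>length cs = length cs'\<close> show ?thesis
        using Cons t g by simp
    qed
  qed
qed

lemma inj_luk: "inj luk"
proof (rule injI)
  fix t t' assume "luk t = luk t'"
  then have "luk_forest [t] = luk_forest [t']" by simp
  then show "t = t'" by (blast dest: luk_forest_inj)
qed

definition tree_words :: "nat \<Rightarrow> nat list set" where
  "tree_words k = {w. length w = k \<and> forest_word 1 w}"

lemma luk_image_plane_trees: "luk ` plane_trees k = tree_words k"
proof (intro equalityI subsetI)
  fix w assume "w \<in> luk ` plane_trees k"
  then show "w \<in> tree_words k"
    using forest_word_luk by (auto simp: tree_words_def plane_trees_def length_luk)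
next
  fix w assume "w \<in> tree_words k"
  then obtain f where w: "length w = k" "length f = 1" "luk_forest f = w"
    unfolding tree_words_def by (blast elim: forest_word_imp_luk_forest)
  then obtain t where "f = [t]" by (cases f) auto
  with w show "w \<in> luk ` plane_trees k"
    by (auto simp: plane_trees_def length_luk)
qed

lemma suffix_iff_drop: "suffix xs ys \<longleftrightarrow> drop (length ys - length xs) ys = xs"
  by (metis suffix_drop suffix_take append_eq_conv_conj suffix_length_le length_take min_absorb2
      diff_le_self)

lemma induce_all: "\<forall>i\<ge>off. P i \<Longrightarrow> induce P off f = f"
  by (induction P off f rule: induce.induct) auto

lemma luk_forest_induce_ge:
  "luk_forest (induce (\<lambda>i. c \<le> i) off f) = drop (c - off) (luk_forest f)"
proof (induction "\<lambda>i::nat. c \<le> i" off f rule: induce.induct)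
  case (2 off cs ts)
  show ?case
  proof (cases "c \<le> off")
    case True
    then show ?thesis by (simp add: induce_all)
  next
    case False
    have "nverts (Node cs) = Suc (length (luk_forest cs))"
      by (simp flip: length_luk)
    with False 2 show ?thesis
      by (simp add: drop_Cons' Suc_diff_Suc)
  qed
qed simp

lemma last_sub_eq_iff_suffix:
  "fsize F \<le> fsize f \<and> last_sub (fsize F) f = F \<longleftrightarrow> suffix (luk_forest F) (luk_forest f)"
proof
  assume "fsize F \<le> fsize f \<and> last_sub (fsize F) f = F"
  then have "luk_forest F = drop (fsize f - fsize F) (luk_forest f)"
    by (metis last_sub_def luk_forest_induce_ge diff_zero)
  then show "suffix (luk_forest F) (luk_forest f)"
    by (simp add: suffix_drop)
next
  assume suffix: "suffix (luk_forest F) (luk_forest f)"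
  then have le: "fsize F \<le> fsize f"
    by (metis suffix_length_le length_luk_forest)
  with suffix have "luk_forest (last_sub (fsize F) f) = luk_forest F"
    by (simp add: last_sub_def luk_forest_induce_ge suffix_iff_drop length_luk_forest)
  with le show "fsize F \<le> fsize f \<and> last_sub (fsize F) f = F"
    by (blast dest: luk_forest_inj)
qed

lemma forest_word_nonneg_excess_imp_Nil: "forest_word h a \<Longrightarrow> 0 \<le> excess a \<Longrightarrow> a = []"
  by (cases "h = 0") (auto simp: forest_word_def)

lemma excess_take_luk_nonneg: "j < nverts t \<Longrightarrow> 0 \<le> excess (take j (luk t))"
  using forest_word_luk[of t] by (force simp: forest_word_def length_luk)

text \<open>A forest word cannot stick out to the left of a nonempty block of nonnegative excess:
  its part before the block would be a proper prefix whose excess is too small.\<close>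
lemma suffix_append_nonneg_excess:
  assumes a: "forest_word h a" and v: "v \<noteq> []" "0 \<le> excess v"
    and suffix: "suffix a (u @ v)"
  shows "suffix a v"
proof (rule ccontr)
  assume "\<not> suffix a v"
  with suffix obtain a' where a': "a = a' @ v"
    by (auto simp: suffix_append)
  then have "excess a' > - int h"
    using a v(1) unfolding forest_word_def by (metis append_eq_conv_conj length_append
      less_add_same_cancel1 length_greater_0_conv)
  moreover have "excess a = - int h"
    using a by (simp add: forest_word_def)
  ultimately show False
    using a' v(2) by simp
qed

definition pattern_count :: "nat list \<Rightarrow> nat list \<Rightarrow> nat" where
  "pattern_count a w = card {j. 0 < j \<and> j < length w \<and> suffix a (take j w)}"

definition context_count :: "nat list \<Rightarrow> nat list \<Rightarrow> nat list \<Rightarrow> nat" where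
  "context_count a u w = (\<Sum>j<length w. of_bool (suffix a (u @ take j w)))"

lemma pattern_count_Cons: "pattern_count a (x # w) = context_count a [x] w"
proof -
  have "{j. 0 < j \<and> j < length (x # w) \<and> suffix a (take j (x # w))} =
      Suc ` {j. j < length w \<and> suffix a (x # take j w)}"
    by (auto simp: image_iff gr0_conv_Suc)
  then show ?thesis
    by (simp add: pattern_count_def context_count_def card_image Int_def)
qed

lemma sum_lessThan_add_split:
  fixes f :: "nat \<Rightarrow> 'a :: comm_monoid_add"
  shows "(\<Sum>j<m + n. f j) = (\<Sum>j<m. f j) + (\<Sum>j<n. f (m + j))"
  by (induction n) (simp_all add: add.assoc)

lemma context_count_append:
  "context_count a u (v @ w) = context_count a u v + context_count a (u @ v) w"
  unfolding context_count_def length_append sum_lessThan_add_split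
  by (intro arg_cong2[where f = "(+)"] sum.cong) auto

lemma context_count_luk:
  assumes a: "forest_word h a"
  shows "context_count a u (luk t) = of_bool (suffix a u) + pattern_count a (luk t)"
proof -
  obtain x w where t: "luk t = x # w"
    by (cases t) simp
  have "suffix a (u @ x # take j w) \<longleftrightarrow> suffix a (x # take j w)" if "j < length w" for j
  proof -
    have "Suc j < nverts t"
      using that t by (simp flip: length_luk)
    then show ?thesis
      using suffix_append_nonneg_excess[OF a] excess_take_luk_nonneg[of "Suc j" t] t
      by (auto intro: suffix_appendI)
  qed
  then have "(\<Sum>j<length w. of_bool (suffix a (u @ x # take j w)) :: nat) = context_count a [x] w"
    unfolding context_count_def by (intro sum.cong) auto
  then show ?thesis
    unfolding t pattern_count_Cons context_count_def length_Cons sum.lessThan_Suc_shift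
    by (simp del: sum_of_bool_eq)
qed

lemma context_count_luk_forest:
  assumes a: "forest_word h a"
  shows "context_count a u (luk_forest f) =
    (\<Sum>i<length f. of_bool (suffix a (u @ luk_forest (take i f)))) + (\<Sum>t\<leftarrow>f. pattern_count a (luk t))"
proof (induction f arbitrary: u)
  case Nil
  then show ?case by (simp add: context_count_def)
next
  case (Cons t f)
  show ?case
    unfolding luk_forest_simps context_count_append context_count_luk[OF a] Cons.IH
      length_Cons sum.lessThan_Suc_shift
    by (simp add: algebra_simps del: sum_of_bool_eq)
qed

lemma pattern_count_Node:
  assumes a: "forest_word h a"
  shows "pattern_count a (luk (Node cs)) =
    card {i. i < length cs \<and> suffix a (luk_forest (take i cs))} + (\<Sum>t\<leftarrow>cs. pattern_count a (luk t))"
proof -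
  have "suffix a (length cs # luk_forest (take i cs)) \<longleftrightarrow> suffix a (luk_forest (take i cs))"
    if "i < length cs" for i
  proof -
    have "excess (luk_forest (take i cs)) = - int i"
      using forest_word_luk_forest[of "take i cs"] that by (simp add: forest_word_def)
    then have "a \<noteq> length cs # luk_forest (take i cs)"
      using forest_word_nonneg_excess_imp_Nil[OF a] that by fastforce
    then show ?thesis by (simp add: suffix_Cons)
  qed
  then show ?thesis
    by (simp add: pattern_count_Cons context_count_luk_forest[OF a] Int_def)
qed

lemma is_pos_Node:
  "is_pos (Node cs) p \<longleftrightarrow> p = [] \<or> (\<exists>i q. p = i # q \<and> i < length cs \<and> is_pos (cs ! i) q)"
  by (auto elim: is_pos.cases intro: is_pos.intros)

lemma finite_is_pos: "finite {p. is_pos t p}"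
proof (induction t)
  case (Node cs)
  have "{p. is_pos (Node cs) p} = insert [] (\<Union>i<length cs. (#) i ` {q. is_pos (cs ! i) q})"
    unfolding is_pos_Node by auto
  with Node show ?case by simp
qed

lemma Fv_Cons: "Fv (Node cs) (i # q) = (if q = [] then take i cs else Fv (cs ! i) q)"
  by (cases q) (auto simp: Fv_def)

definition matching_vertices :: "nat list \<Rightarrow> ptree \<Rightarrow> nat list set" where
  "matching_vertices a t = {p. is_pos t p \<and> p \<noteq> [] \<and> suffix a (luk_forest (Fv t p))}"

lemma matching_vertices_Node:
  "matching_vertices a (Node cs) =
    (\<lambda>i. [i]) ` {i. i < length cs \<and> suffix a (luk_forest (take i cs))}
    \<union> (\<Union>i<length cs. (#) i ` matching_vertices a (cs ! i))"
  by (auto simp: matching_vertices_def is_pos_Node Fv_Cons split: if_splits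
      intro: is_pos.intros; force)

lemma card_matching_vertices:
  assumes a: "forest_word h a"
  shows "card (matching_vertices a t) = pattern_count a (luk t)"
proof (induction t)
  case (Node cs)
  have fin: "finite (matching_vertices a t)" for t
    by (rule finite_subset[OF _ finite_is_pos]) (auto simp: matching_vertices_def)
  have "card (\<Union>i<length cs. (#) i ` matching_vertices a (cs ! i)) =
      (\<Sum>i<length cs. card ((#) i ` matching_vertices a (cs ! i)))"
    by (rule card_UN_disjoint) (auto simp: fin)
  then have "card (matching_vertices a (Node cs)) =
      card {i. i < length cs \<and> suffix a (luk_forest (take i cs))}
      + (\<Sum>i<length cs. card ((#) i ` matching_vertices a (cs ! i)))"
    unfolding matching_vertices_Node
    using fin by (subst card_Un_disjoint) (auto simp: card_image inj_on_def matching_vertices_def)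
  also have "\<dots> = card {i. i < length cs \<and> suffix a (luk_forest (take i cs))}
      + (\<Sum>t\<leftarrow>cs. pattern_count a (luk t))"
    using Node by (simp add: card_image sum_list_sum_nth atLeast0LessThan)
  finally show ?case
    unfolding pattern_count_Node[OF a] .
qed

lemma rho_eq_pattern_count:
  assumes "t \<in> plane_trees k"
  shows "rho F t = real (pattern_count (luk_forest F) (luk t)) / real k"
proof -
  have "{p. is_pos t p \<and> p \<noteq> [] \<and> fsize (Fv t p) \<ge> fsize F \<and> last_sub (fsize F) (Fv t p) = F}
      = matching_vertices (luk_forest F) t"
    by (auto simp: matching_vertices_def simp flip: last_sub_eq_iff_suffix)
  then show ?thesis
    using assms card_matching_vertices[OF forest_word_luk_forest]
    by (simp add: rho_def plane_trees_def)
qed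

definition weak_comps :: "nat \<Rightarrow> nat \<Rightarrow> nat list set" where
  "weak_comps n N = {c. length c = n \<and> sum_list c = N}"

lemma finite_weak_comps: "finite (weak_comps n N)"
proof (rule finite_subset)
  show "weak_comps n N \<subseteq> {c. set c \<subseteq> {..N} \<and> length c = n}"
    using member_le_sum_list by (fastforce simp: weak_comps_def)
qed (simp add: finite_lists_length_eq)

lemma card_weak_comps: "card (weak_comps n N) = (N + n - 1) choose N"
  unfolding weak_comps_def by (rule card_length_sum_list)

lemma sum_list_rotate: "sum_list (rotate r xs) = (sum_list xs :: 'a :: comm_monoid_add)"
  by (metis add.commute append_take_drop_id rotate_drop_take sum_list_append)

lemma inj_rotate: "inj (rotate r)"
  unfolding rotate_def by (rule bij_is_inj, rule bij_betw_funpow, rule bij_rotate1)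

lemma rotate_weak_comps: "rotate r ` weak_comps n N = weak_comps n N"
  by (rule endo_inj_surj[OF finite_weak_comps])
    (auto simp: weak_comps_def sum_list_rotate intro: inj_on_subset[OF inj_rotate])

lemma sum_weak_comps_rotate:
  "(\<Sum>c\<in>weak_comps n N. f (rotate r c)) = (\<Sum>c\<in>weak_comps n N. f c)"
  using sum.reindex[OF inj_on_subset[OF inj_rotate], of "weak_comps n N" f]
  by (simp add: rotate_weak_comps)

lemma card_weak_comps_rotate:
  "card {c \<in> weak_comps n N. P (rotate r c)} = card {c \<in> weak_comps n N. P c}"
  using sum_weak_comps_rotate[of "\<lambda>c. of_bool (P c) :: nat"]
  by (simp add: finite_weak_comps Int_def)

lemma card_weak_comps_prefix:
  assumes "length a \<le> n" and "sum_list a \<le> N"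
  shows "card {c \<in> weak_comps n N. take (length a) c = a \<and> P (drop (length a) c)}
    = card {c \<in> weak_comps (n - length a) (N - sum_list a). P c}"
proof (rule bij_betw_same_card[of "drop (length a)"], rule bij_betw_byWitness[where f' = "(@) a"])
  show "drop (length a) ` {c \<in> weak_comps n N. take (length a) c = a \<and> P (drop (length a) c)}
      \<subseteq> {c \<in> weak_comps (n - length a) (N - sum_list a). P c}"
    by (auto simp: weak_comps_def) (metis append_take_drop_id sum_list_append diff_add_inverse)
qed (use assms in \<open>auto simp: weak_comps_def, metis append_take_drop_id\<close>)

section \<open>The cycle lemma\<close>

lemma tree_words_subset: "tree_words k \<subseteq> weak_comps k (k - 1)"
  by (auto simp: tree_words_def weak_comps_def forest_word_def excess_eq)

lemma excess_take_drop: "excess xs = excess (take d xs) + excess (drop d xs)"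
  by (metis append_take_drop_id excess_simps(3))

lemma rotate_tree_word_unique:
  assumes w: "w \<in> tree_words k" and rotated: "rotate d w \<in> tree_words k" and "d < k"
  shows "d = 0"
proof (rule ccontr)
  assume "d \<noteq> 0"
  have rot: "rotate d w = drop d w @ take d w"
    using w \<open>d < k\<close> by (simp add: tree_words_def rotate_drop_take)
  have "excess (take (k - d) (rotate d w)) > -1"
    using rotated \<open>d \<noteq> 0\<close> \<open>d < k\<close> by (simp add: tree_words_def forest_word_def)
  moreover have "take (k - d) (rotate d w) = drop d w"
    using rot w by (simp add: tree_words_def)
  moreover have "excess (take d w) > -1" and "excess w = -1"
    using w \<open>d < k\<close> by (simp_all add: tree_words_def forest_word_def)
  ultimately show False
    using excess_take_drop[of w d] by simp
qed

text \<open>Rotating a word of length k and letter sum k - 1 to start just after the first minimum of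
  its prefix excesses makes every proper prefix excess nonnegative.\<close>
lemma exists_rotate_tree_word:
  assumes c: "c \<in> weak_comps k (k - 1)" and "1 \<le> k"
  obtains d where "d < k" and "rotate d c \<in> tree_words k"
proof -
  have len: "length c = k" and excess_c: "excess c = -1"
    using c \<open>1 \<le> k\<close> by (auto simp: weak_comps_def excess_eq of_nat_diff)
  define S where "S j = excess (take j c)" for j
  define is_min where "is_min d \<longleftrightarrow> d < k \<and> (\<forall>i<k. S d \<le> S i)" for d
  have "Min (S ` {..<k}) \<in> S ` {..<k}"
    using \<open>1 \<le> k\<close> by (intro Min_in) (auto simp: lessThan_empty_iff)
  then obtain d0 where "d0 < k" and "S d0 = Min (S ` {..<k})"
    by auto
  then have "is_min d0"
    unfolding is_min_def by simp
  define d where "d = (LEAST d. is_min d)"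
  have min_d: "is_min d"
    unfolding d_def using \<open>is_min d0\<close> by (rule LeastI)
  have "S d < S i" if "i < d" for i
  proof -
    have "\<not> is_min i"
      using not_less_Least[OF that[unfolded d_def]] .
    moreover have "i < k"
      using that min_d by (simp add: is_min_def)
    ultimately obtain i' where "i' < k" "S i' < S i"
      unfolding is_min_def by auto
    with min_d show ?thesis
      unfolding is_min_def by force
  qed
  with min_d have d: "d < k" "\<forall>i<k. S d \<le> S i" "\<forall>i<d. S d < S i"
    unfolding is_min_def by auto
  have rot: "rotate d c = drop d c @ take d c"
    using d len by (simp add: rotate_drop_take)
  have "excess (take j (rotate d c)) > -1" if "j < k" for j
  proof (cases "d + j \<le> k")
    case True
    then have "S (d + j) = S d + excess (take j (rotate d c))"
      using rot len by (simp add: S_def take_add)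
    moreover have "S d \<le> S (d + j) \<or> (d + j = k \<and> 0 < d)"
      using d \<open>j < k\<close> True by (cases "d + j = k") auto
    moreover have "S k = -1" and "S 0 = 0"
      using len excess_c by (simp_all add: S_def)
    ultimately show ?thesis
      using d(3) by fastforce
  next
    case False
    then have "take j (rotate d c) = drop d c @ take (d + j - k) c"
      using rot len \<open>j < k\<close> d(1) by (simp add: min_def ac_simps)
    moreover have "S d < S (d + j - k)"
      using d False \<open>j < k\<close> by simp
    ultimately show ?thesis
      using excess_take_drop[of c d] excess_c by (simp add: S_def)
  qed
  then have "rotate d c \<in> tree_words k"
    using len excess_c by (simp add: tree_words_def forest_word_def sum_list_rotate excess_eq)
  with d(1) show ?thesis ..
qed

lemma cycle_lemma:
  assumes "1 \<le> k"
  shows "bij_betw (\<lambda>(w, r). rotate r w) (tree_words k \<times> {..<k}) (weak_comps k (k - 1))"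
proof (rule bij_betw_imageI)
  show "inj_on (\<lambda>(w, r). rotate r w) (tree_words k \<times> {..<k})"
  proof (rule inj_onI, clarify)
    fix w r w' r'
    assume w: "w \<in> tree_words k" "r < k" and w': "w' \<in> tree_words k" "r' < k"
      and eq: "rotate r w = rotate r' w'"
    have len: "length w = k" "length w' = k"
      using w w' by (simp_all add: tree_words_def)
    have "w = rotate (k - r + r') w'"
      using arg_cong[OF eq, of "rotate (k - r)"] len \<open>r < k\<close>
      by (simp add: rotate_rotate)
    then have w_eq: "w = rotate ((k - r + r') mod k) w'"
      using len by (metis rotate_conv_mod)
    then have "(k - r + r') mod k = 0"
      using rotate_tree_word_unique[OF w'(1) _ mod_less_divisor] w(1) \<open>1 \<le> k\<close> by simp
    moreover have "0 < k - r + r'" and "k - r + r' < k + k"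
      using w(2) w'(2) by simp_all
    ultimately have "k - r + r' = k"
      by (cases "k \<le> k - r + r'") (simp_all add: le_mod_geq)
    then have "r = r'"
      using w(2) by simp
    with w_eq show "w = w' \<and> r = r'"
      using \<open>(k - r + r') mod k = 0\<close> by simp
  qed
next
  show "(\<lambda>(w, r). rotate r w) ` (tree_words k \<times> {..<k}) = weak_comps k (k - 1)"
  proof (intro equalityI subsetI)
    fix c assume "c \<in> (\<lambda>(w, r). rotate r w) ` (tree_words k \<times> {..<k})"
    then obtain w r where "w \<in> tree_words k" and c: "c = rotate r w"
      by auto
    then show "c \<in> weak_comps k (k - 1)"
      using tree_words_subset rotate_weak_comps by blast
  next
    fix c assume c: "c \<in> weak_comps k (k - 1)"
    obtain d where "d < k" and d: "rotate d c \<in> tree_words k"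
      using exists_rotate_tree_word[OF c \<open>1 \<le> k\<close>] .
    have "((k - d) mod k + d) mod k = 0"
      using \<open>d < k\<close> by (simp add: mod_add_left_eq)
    then have "c = rotate ((k - d) mod k) (rotate d c)"
      using c by (simp add: weak_comps_def rotate_rotate)
    with d \<open>1 \<le> k\<close> show "c \<in> (\<lambda>(w, r). rotate r w) ` (tree_words k \<times> {..<k})"
      by force
  qed
qed

lemma sum_weak_comps_eq_sum_tree_words:
  assumes "1 \<le> k" and invariant: "\<And>c r. length c = k \<Longrightarrow> g (rotate r c) = g c"
  shows "(\<Sum>c\<in>weak_comps k (k - 1). g c) = real k * (\<Sum>w\<in>tree_words k. g w)"
proof -
  have "(\<Sum>c\<in>weak_comps k (k - 1). g c) = (\<Sum>(w, r)\<in>tree_words k \<times> {..<k}. g (rotate r w))"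
    using sum.reindex_bij_betw[OF cycle_lemma[OF \<open>1 \<le> k\<close>], of g]
    by (simp add: case_prod_beta')
  also have "\<dots> = (\<Sum>(w, r)\<in>tree_words k \<times> {..<k}. g w)"
    by (intro sum.cong) (auto simp: invariant tree_words_def)
  finally show ?thesis
    by (simp add: sum.cartesian_product[symmetric] sum_distrib_left)
qed

lemma finite_tree_words: "finite (tree_words k)"
  using tree_words_subset finite_weak_comps by (rule finite_subset)

lemma card_plane_trees: "card (plane_trees k) = card (tree_words k)"
  using card_image[OF inj_on_subset[OF inj_luk], of "plane_trees k"] luk_image_plane_trees[of k]
  by simp

lemma finite_plane_trees: "finite (plane_trees k)"
  using finite_image_iff[OF inj_on_subset[OF inj_luk], of "plane_trees k"] luk_image_plane_trees[of k]
    finite_tree_words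
  by simp

lemma sum_plane_trees_eq_sum_tree_words:
  "(\<Sum>t\<in>plane_trees k. g (luk t)) = (\<Sum>w\<in>tree_words k. g w)"
  using sum.reindex[OF inj_on_subset[OF inj_luk], of "plane_trees k" g]
  by (simp add: luk_image_plane_trees)

lemma card_weak_comps_eq_card_plane_trees:
  "1 \<le> k \<Longrightarrow> card (weak_comps k (k - 1)) = k * card (plane_trees k)"
  using bij_betw_same_card[OF cycle_lemma, of k]
  by (simp add: card_cartesian_product card_plane_trees mult.commute)

lemma card_weak_comps_pos: "1 \<le> k \<Longrightarrow> 0 < card (weak_comps k (k - 1))"
  by (simp add: card_weak_comps)

section \<open>Cyclic occurrences and their moments\<close>

definition occurs_at :: "nat list \<Rightarrow> nat list \<Rightarrow> nat \<Rightarrow> bool" where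
  "occurs_at a c i \<longleftrightarrow> take (length a) (rotate i c) = a"

definition cyclic_count :: "nat list \<Rightarrow> nat list \<Rightarrow> nat" where
  "cyclic_count a c = card {i. i < length c \<and> occurs_at a c i}"

lemma occurs_at_rotate: "occurs_at a (rotate r c) i \<longleftrightarrow> occurs_at a c (i + r)"
  by (simp add: occurs_at_def rotate_rotate)

lemma occurs_at_0: "occurs_at a c 0 \<longleftrightarrow> take (length a) c = a"
  by (simp add: occurs_at_def)

lemma occurs_at_iff_take_drop:
  "i < length c \<Longrightarrow> i + length a \<le> length c \<Longrightarrow> occurs_at a c i \<longleftrightarrow> take (length a) (drop i c) = a"
  by (simp add: occurs_at_def rotate_drop_take)

lemma occurs_at_add_length: "occurs_at a c (i + length c) \<longleftrightarrow> occurs_at a c i"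
  by (metis occurs_at_def rotate_conv_mod mod_add_self2)

lemma sum_lessThan_shift_periodic:
  fixes g :: "nat \<Rightarrow> 'a :: cancel_comm_monoid_add"
  assumes periodic: "\<And>i. g (i + n) = g i"
  shows "(\<Sum>i<n. g (i + r)) = (\<Sum>i<n. g i)"
proof (induction r)
  case (Suc r)
  have "(\<Sum>i<n. g (i + Suc r)) + g r = g (0 + r) + (\<Sum>i<n. g (Suc i + r))"
    using periodic[of r] by (simp add: add.commute)
  also have "\<dots> = (\<Sum>i<Suc n. g (i + r))"
    by (simp only: sum.lessThan_Suc_shift)
  also have "\<dots> = (\<Sum>i<n. g (i + r)) + g r"
    using periodic[of r] by (simp add: add.commute)
  finally show ?case
    using Suc by (simp add: add.commute)
qed simp

lemma cyclic_count_eq_sum: "cyclic_count a c = (\<Sum>i<length c. of_bool (occurs_at a c i))"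
  by (simp add: cyclic_count_def Int_def)

lemma cyclic_count_rotate: "cyclic_count a (rotate r c) = cyclic_count a c"
  unfolding cyclic_count_eq_sum occurs_at_rotate length_rotate
  by (intro sum_lessThan_shift_periodic[where g = "\<lambda>i. of_bool (occurs_at a c i)"])
    (simp add: occurs_at_add_length)

lemma suffix_take_iff_occurs_at:
  assumes "length a \<le> j" and "j < length w"
  shows "suffix a (take j w) \<longleftrightarrow> occurs_at a w (j - length a)"
  using assms by (simp add: suffix_iff_drop occurs_at_iff_take_drop drop_take)

text \<open>Every linear match ending before position j gives the cyclic occurrence starting at
  j - |a|; the only cyclic occurrences not obtained this way start in the last |a| positions
  or, when a is empty, at 0.\<close>
lemma pattern_count_cyclic_count_bounds:
  "pattern_count a w \<le> cyclic_count a w \<and> cyclic_count a w \<le> pattern_count a w + length a + 1"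
proof -
  define P where "P = {j. 0 < j \<and> j < length w \<and> suffix a (take j w)}"
  define C where "C = {i. i < length w \<and> occurs_at a w i}"
  have P_ge: "length a \<le> j" if "j \<in> P" for j
    using that by (auto simp: P_def dest!: suffix_length_le)
  have "inj_on (\<lambda>j. j - length a) P"
    by (rule inj_onI) (simp add: P_ge eq_diff_iff)
  moreover have "(\<lambda>j. j - length a) ` P \<subseteq> C"
  proof
    fix i assume "i \<in> (\<lambda>j. j - length a) ` P"
    then obtain j where j: "j \<in> P" and i: "i = j - length a"
      by blast
    then show "i \<in> C"
      using P_ge[OF j] suffix_take_iff_occurs_at[of a j w] by (auto simp: P_def C_def)
  qed
  ultimately have "card P \<le> card C"
    by (rule card_inj_on_le) (simp add: C_def)
  have "C \<subseteq> (\<lambda>j. j - length a) ` P \<union> {length w - length a..<length w} \<union> {0}"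
  proof
    fix i assume i: "i \<in> C"
    show "i \<in> (\<lambda>j. j - length a) ` P \<union> {length w - length a..<length w} \<union> {0}"
    proof (cases "0 < i + length a \<and> i + length a < length w")
      case True
      then have "i + length a \<in> P"
        using i suffix_take_iff_occurs_at[of a "i + length a" w] by (simp add: P_def C_def)
      then show ?thesis
        by (intro UnI1 image_eqI[where x = "i + length a"]) simp_all
    qed (use i in \<open>auto simp: C_def\<close>)
  qed
  then have "card C \<le> card ((\<lambda>j. j - length a) ` P \<union> {length w - length a..<length w} \<union> {0})"
    by (intro card_mono) (simp_all add: P_def)
  also have "\<dots> \<le> card ((\<lambda>j. j - length a) ` P) + card {length w - length a..<length w} + card {0 :: nat}"
    by (intro order.trans[OF card_Un_le] add_mono card_Un_le order.refl)
  also have "\<dots> \<le> card P + length a + 1"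
    by (intro add_mono card_image_le) (simp_all add: P_def)
  finally show ?thesis
    using \<open>card P \<le> card C\<close> by (simp add: pattern_count_def cyclic_count_def P_def C_def)
qed

lemma sum_cyclic_count:
  "(\<Sum>c\<in>weak_comps n N. cyclic_count a c) = n * card {c \<in> weak_comps n N. occurs_at a c 0}"
proof -
  have "(\<Sum>c\<in>weak_comps n N. cyclic_count a c)
      = (\<Sum>c\<in>weak_comps n N. \<Sum>i<n. of_bool (occurs_at a (rotate i c) 0))"
    by (intro sum.cong) (simp_all add: cyclic_count_eq_sum occurs_at_rotate weak_comps_def)
  also have "\<dots> = (\<Sum>i<n. \<Sum>c\<in>weak_comps n N. of_bool (occurs_at a (rotate i c) 0))"
    by (rule sum.swap)
  also have "\<dots> = n * card {c \<in> weak_comps n N. occurs_at a c 0}"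
    by (simp add: sum_weak_comps_rotate[where f = "\<lambda>c. of_bool (occurs_at a c 0)"]
        finite_weak_comps Int_def)
  finally show ?thesis .
qed

lemma sum_cyclic_count_squared:
  "(\<Sum>c\<in>weak_comps n N. (cyclic_count a c)\<^sup>2)
    = n * (\<Sum>d<n. card {c \<in> weak_comps n N. occurs_at a c 0 \<and> occurs_at a c d})"
proof -
  define pair where "pair c d \<longleftrightarrow> occurs_at a c 0 \<and> occurs_at a c d" for c d
  have square: "(cyclic_count a c)\<^sup>2 = (\<Sum>i<n. \<Sum>d<n. of_bool (pair (rotate i c) d))"
    if "c \<in> weak_comps n N" for c
  proof -
    have len: "length c = n"
      using that by (simp add: weak_comps_def)
    have periodic: "of_bool (occurs_at a c (j + n)) = (of_bool (occurs_at a c j) :: nat)" for j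
      using occurs_at_add_length[of a c j] len by simp
    have "(cyclic_count a c)\<^sup>2 = (\<Sum>i<n. \<Sum>j<n. of_bool (occurs_at a c i) * of_bool (occurs_at a c j))"
      by (simp add: cyclic_count_eq_sum len power2_eq_square sum_product del: sum_of_bool_eq)
    also have "\<dots> = (\<Sum>i<n. \<Sum>d<n. of_bool (occurs_at a c i) * of_bool (occurs_at a c (d + i)))"
      unfolding sum_distrib_left[symmetric]
      using sum_lessThan_shift_periodic[of "\<lambda>j. of_bool (occurs_at a c j)", OF periodic]
      by (simp only:)
    also have "\<dots> = (\<Sum>i<n. \<Sum>d<n. of_bool (pair (rotate i c) d))"
      by (simp only: pair_def occurs_at_rotate of_bool_conj add_0)
    finally show ?thesis .
  qed
  have "(\<Sum>c\<in>weak_comps n N. (cyclic_count a c)\<^sup>2)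
      = (\<Sum>c\<in>weak_comps n N. \<Sum>i<n. \<Sum>d<n. of_bool (pair (rotate i c) d))"
    by (rule sum.cong) (simp_all add: square del: sum_of_bool_eq)
  also have "\<dots> = (\<Sum>i<n. \<Sum>c\<in>weak_comps n N. \<Sum>d<n. of_bool (pair (rotate i c) d))"
    by (rule sum.swap)
  also have "\<dots> = n * (\<Sum>c\<in>weak_comps n N. \<Sum>d<n. of_bool (pair c d))"
    by (simp only: sum_weak_comps_rotate[where f = "\<lambda>c. \<Sum>d<n. of_bool (pair c d)"]
        sum_constant card_lessThan of_nat_id)
  also have "\<dots> = n * (\<Sum>d<n. \<Sum>c\<in>weak_comps n N. of_bool (pair c d))"
    by (simp only: sum.swap[of _ "weak_comps n N"])
  finally show ?thesis
    by (simp add: finite_weak_comps pair_def Int_def)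
qed

lemma card_occurs_at_0:
  assumes "length a \<le> n" and "sum_list a \<le> N"
  shows "card {c \<in> weak_comps n N. occurs_at a c 0} = card (weak_comps (n - length a) (N - sum_list a))"
  using card_weak_comps_prefix[OF assms, of "\<lambda>_. True"] by (simp add: occurs_at_0)

lemma card_occurs_at_0_and:
  assumes "length a \<le> d" and "d < n" and "d + length a \<le> n" and "2 * sum_list a \<le> N"
  shows "card {c \<in> weak_comps n N. occurs_at a c 0 \<and> occurs_at a c d}
    = card (weak_comps (n - 2 * length a) (N - 2 * sum_list a))"
proof -
  let ?m = "length a" and ?s = "sum_list a"
  have "occurs_at a c d \<longleftrightarrow> occurs_at a (drop ?m c) (d - ?m)" if "length c = n" for c
    using that assms by (simp add: occurs_at_iff_take_drop)
  then have "card {c \<in> weak_comps n N. occurs_at a c 0 \<and> occurs_at a c d}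
      = card {c \<in> weak_comps n N. take ?m c = a \<and> occurs_at a (drop ?m c) (d - ?m)}"
    by (intro arg_cong[where f = card]) (auto simp: weak_comps_def occurs_at_0)
  also have "\<dots> = card {c \<in> weak_comps (n - ?m) (N - ?s). occurs_at a c (d - ?m)}"
    using assms card_weak_comps_prefix[of a n N "\<lambda>c. occurs_at a c (d - ?m)"] by simp
  also have "\<dots> = card {c \<in> weak_comps (n - ?m) (N - ?s). occurs_at a (rotate (d - ?m) c) 0}"
    by (simp add: occurs_at_rotate)
  also have "\<dots> = card {c \<in> weak_comps (n - ?m) (N - ?s). occurs_at a c 0}"
    by (rule card_weak_comps_rotate)
  also have "\<dots> = card (weak_comps (n - 2 * ?m) (N - 2 * ?s))"
    using assms by (subst card_occurs_at_0) (simp_all add: diff_diff_add mult_2)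
  finally show ?thesis .
qed

lemma sum_card_occurs_at_pairs_le:
  assumes "2 * length a \<le> n" and "2 * sum_list a \<le> N"
  shows "(\<Sum>d<n. card {c \<in> weak_comps n N. occurs_at a c 0 \<and> occurs_at a c d})
    \<le> n * card (weak_comps (n - 2 * length a) (N - 2 * sum_list a)) + 2 * length a * card (weak_comps n N)"
proof -
  let ?m = "length a" and ?W = "weak_comps n N"
  let ?pairs = "card (weak_comps (n - 2 * ?m) (N - 2 * sum_list a))"
  define near where "near d \<longleftrightarrow> d < ?m \<or> n < d + ?m" for d
  have each: "card {c \<in> ?W. occurs_at a c 0 \<and> occurs_at a c d} \<le> ?pairs + of_bool (near d) * card ?W"
    if "d < n" for d
  proof (cases "near d")
    case True
    have "card {c \<in> ?W. occurs_at a c 0 \<and> occurs_at a c d} \<le> card ?W"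
      by (intro card_mono finite_weak_comps) auto
    with True show ?thesis by simp
  next
    case False
    with that assms show ?thesis
      by (simp add: near_def card_occurs_at_0_and)
  qed
  have "{d. d < n \<and> near d} \<subseteq> {..<?m} \<union> {n - ?m..<n}"
    by (auto simp: near_def)
  then have "card {d. d < n \<and> near d} \<le> card ({..<?m} \<union> {n - ?m..<n})"
    by (intro card_mono) simp_all
  also have "\<dots> \<le> 2 * ?m"
    by (rule order.trans[OF card_Un_le]) simp
  finally have near_card: "card {d. d < n \<and> near d} \<le> 2 * ?m" .
  have "(\<Sum>d<n. card {c \<in> ?W. occurs_at a c 0 \<and> occurs_at a c d})
      \<le> (\<Sum>d<n. ?pairs + of_bool (near d) * card ?W)"
    using each by (intro sum_mono) simp
  also have "\<dots> = n * ?pairs + card {d. d < n \<and> near d} * card ?W"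
    by (simp add: sum.distrib Int_def)
  also have "\<dots> \<le> n * ?pairs + 2 * ?m * card ?W"
    using near_card by simp
  finally show ?thesis .
qed

section \<open>Asymptotics of the moments\<close>

lemma tendsto_diff_over_twice:
  "(\<lambda>k. real (k - p) / real (2 * k - q)) \<longlonglongrightarrow> 1 / 2"
proof -
  have "(\<lambda>k. (1 - real p / real k) / (2 - real q / real k)) \<longlonglongrightarrow> (1 - 0) / (2 - 0)"
    by (intro tendsto_intros lim_const_over_n) simp
  moreover have "\<forall>\<^sub>F k in sequentially.
      (1 - real p / real k) / (2 - real q / real k) = real (k - p) / real (2 * k - q)"
  proof (rule eventually_sequentiallyI[of "p + q + 1"])
    fix k assume "p + q + 1 \<le> k"
    then show "(1 - real p / real k) / (2 - real q / real k) = real (k - p) / real (2 * k - q)"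
      by (simp add: of_nat_diff field_simps)
  qed
  ultimately show ?thesis
    by (simp add: tendsto_cong)
qed

lemma binomial_pred_absorb:
  "0 < n \<Longrightarrow> real ((n - 1) choose j) = real (n choose j) * (real (n - j) / real n)"
  using binomial_absorb_comp[of n j] by (simp add: field_simps flip: of_nat_mult)

lemma binomial_pred_absorb_Suc:
  "0 < n \<Longrightarrow> real ((n - 1) choose j) = real (n choose Suc j) * (real (Suc j) / real n)"
  using binomial_absorption[of j n] by (simp add: field_simps flip: of_nat_mult)

text \<open>The probability that a uniform word of length k and letter sum k - 1 begins with a fixed
  word of length l and letter sum r.\<close>
definition comps_ratio :: "nat \<Rightarrow> nat \<Rightarrow> nat \<Rightarrow> real" where
  "comps_ratio l r k = real (card (weak_comps (k - l) (k - 1 - r))) / real (card (weak_comps k (k - 1)))"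

lemma card_weak_comps_shifted:
  assumes "l + r + 2 \<le> k"
  shows "card (weak_comps (k - l) (k - 1 - r)) = (2 * k - 2 - l - r) choose (k - 1 - r)"
proof -
  have "k - 1 - r + (k - l) - 1 = 2 * k - 2 - l - r"
    using assms by simp
  then show ?thesis
    by (simp add: card_weak_comps)
qed

lemma comps_ratio_Suc_left:
  assumes "l + r + 3 \<le> k"
  shows "comps_ratio (Suc l) r k = comps_ratio l r k * (real (k - (1 + l)) / real (2 * k - (2 + l + r)))"
proof -
  define n where "n = 2 * k - 2 - l - r"
  have "n - 1 = 2 * k - 2 - Suc l - r" and "n - (k - 1 - r) = k - (1 + l)"
    and "n = 2 * k - (2 + l + r)" and "0 < n"
    using assms by (simp_all add: n_def)
  then show ?thesis
    using assms binomial_pred_absorb[of n "k - 1 - r"]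
      card_weak_comps_shifted[of l r k] card_weak_comps_shifted[of "Suc l" r k]
    by (simp add: comps_ratio_def n_def)
qed

lemma comps_ratio_Suc_right:
  assumes "l + r + 3 \<le> k"
  shows "comps_ratio l (Suc r) k = comps_ratio l r k * (real (k - (1 + r)) / real (2 * k - (2 + l + r)))"
proof -
  define n where "n = 2 * k - 2 - l - r"
  have "n - 1 = 2 * k - 2 - l - Suc r" and "Suc (k - 1 - Suc r) = k - 1 - r"
    and "k - (1 + r) = k - 1 - r" and "n = 2 * k - (2 + l + r)" and "0 < n"
    using assms by (simp_all add: n_def)
  then show ?thesis
    using assms binomial_pred_absorb_Suc[of n "k - 1 - Suc r"]
      card_weak_comps_shifted[of l r k] card_weak_comps_shifted[of l "Suc r" k]
    by (simp add: comps_ratio_def n_def)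
qed

lemma comps_ratio_tendsto: "comps_ratio l r \<longlonglongrightarrow> (1 / 2) ^ (l + r)"
proof (induction l)
  case 0
  show ?case
  proof (induction r)
    case 0
    have "\<forall>\<^sub>F k in sequentially. 1 = comps_ratio 0 0 k"
      by (rule eventually_sequentiallyI[of 1]) (simp add: comps_ratio_def card_weak_comps)
    then show ?case
      by (simp add: tendsto_cong)
  next
    case (Suc r)
    have "(\<lambda>k. comps_ratio 0 r k * (real (k - (1 + r)) / real (2 * k - (2 + 0 + r))))
        \<longlonglongrightarrow> (1 / 2) ^ (0 + r) * (1 / 2)"
      by (intro tendsto_mult Suc tendsto_diff_over_twice)
    moreover have "\<forall>\<^sub>F k in sequentially.
        comps_ratio 0 r k * (real (k - (1 + r)) / real (2 * k - (2 + 0 + r))) = comps_ratio 0 (Suc r) k"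
      by (rule eventually_sequentiallyI[of "r + 3"]) (simp add: comps_ratio_Suc_right)
    ultimately show ?case
      by (simp add: tendsto_cong)
  qed
next
  case (Suc l)
  have "(\<lambda>k. comps_ratio l r k * (real (k - (1 + l)) / real (2 * k - (2 + l + r))))
      \<longlonglongrightarrow> (1 / 2) ^ (l + r) * (1 / 2)"
    by (intro tendsto_mult Suc tendsto_diff_over_twice)
  moreover have "\<forall>\<^sub>F k in sequentially.
      comps_ratio l r k * (real (k - (1 + l)) / real (2 * k - (2 + l + r))) = comps_ratio (Suc l) r k"
    by (rule eventually_sequentiallyI[of "l + r + 3"]) (simp add: comps_ratio_Suc_left)
  ultimately show ?case
    by (simp add: tendsto_cong)
qed

lemma sum_cyclic_count_eq_comps_ratio:
  assumes "length a \<le> k" and "sum_list a \<le> k - 1" and "1 \<le> k"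
  shows "(\<Sum>c\<in>weak_comps k (k - 1). real (cyclic_count a c))
    = real k * real (card (weak_comps k (k - 1))) * comps_ratio (length a) (sum_list a) k"
proof -
  have "(\<Sum>c\<in>weak_comps k (k - 1). real (cyclic_count a c))
      = real k * real (card (weak_comps (k - length a) (k - 1 - sum_list a)))"
    using sum_cyclic_count[where n = k and N = "k - 1" and a = a] card_occurs_at_0[OF assms(1,2)]
    by (simp flip: of_nat_sum)
  then show ?thesis
    using card_weak_comps_pos[OF \<open>1 \<le> k\<close>] by (simp add: comps_ratio_def)
qed

lemma sum_cyclic_count_squared_le_comps_ratio:
  assumes "2 * length a \<le> k" and "2 * sum_list a \<le> k - 1" and "1 \<le> k"
  shows "(\<Sum>c\<in>weak_comps k (k - 1). (real (cyclic_count a c))\<^sup>2)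
    \<le> real k * real (card (weak_comps k (k - 1)))
      * (real k * comps_ratio (2 * length a) (2 * sum_list a) k + 2 * real (length a))"
proof -
  let ?W = "card (weak_comps k (k - 1))"
  have "(\<Sum>c\<in>weak_comps k (k - 1). (cyclic_count a c)\<^sup>2)
      \<le> k * (k * card (weak_comps (k - 2 * length a) (k - 1 - 2 * sum_list a)) + 2 * length a * ?W)"
    unfolding sum_cyclic_count_squared using sum_card_occurs_at_pairs_le[OF assms(1,2)] by simp
  then have "(\<Sum>c\<in>weak_comps k (k - 1). (real (cyclic_count a c))\<^sup>2)
      \<le> real k * (real k * real (card (weak_comps (k - 2 * length a) (k - 1 - 2 * sum_list a)))
        + 2 * real (length a) * real ?W)"
    by (simp flip: of_nat_sum of_nat_power) (metis of_nat_le_iff of_nat_add of_nat_mult of_nat_numeral)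
  then show ?thesis
    using card_weak_comps_pos[OF \<open>1 \<le> k\<close>] by (simp add: comps_ratio_def algebra_simps)
qed

definition variance_bound :: "nat \<Rightarrow> nat \<Rightarrow> nat \<Rightarrow> real" where
  "variance_bound m s k = comps_ratio (2 * m) (2 * s) k + 2 * real m / real k
    - 2 * (1 / 2) ^ (m + s) * comps_ratio m s k + ((1 / 2) ^ (m + s))\<^sup>2"

lemma variance_bound_tendsto: "variance_bound m s \<longlonglongrightarrow> 0"
proof -
  define \<mu> :: real where "\<mu> = (1 / 2) ^ (m + s)"
  have "comps_ratio (2 * m) (2 * s) \<longlonglongrightarrow> \<mu>\<^sup>2"
    using comps_ratio_tendsto[of "2 * m" "2 * s"] by (simp add: \<mu>_def algebra_simps flip: power_mult)
  moreover have "comps_ratio m s \<longlonglongrightarrow> \<mu>"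
    unfolding \<mu>_def by (rule comps_ratio_tendsto)
  moreover have "(\<lambda>k. 2 * real m / real k) \<longlonglongrightarrow> 0"
    by (rule lim_const_over_n)
  ultimately have "variance_bound m s \<longlonglongrightarrow> \<mu>\<^sup>2 + 0 - 2 * \<mu> * \<mu> + \<mu>\<^sup>2"
    unfolding variance_bound_def \<mu>_def[symmetric] by (intro tendsto_intros)
  then show ?thesis
    by (simp add: power2_eq_square)
qed

lemma sum_plane_trees_cyclic_deviation_le:
  fixes a :: "nat list"
  defines "\<mu> \<equiv> (1 / 2) ^ (length a + sum_list a) :: real"
  assumes k: "2 * length a + 2 * sum_list a + 2 \<le> k"
  shows "(\<Sum>t\<in>plane_trees k. (real (cyclic_count a (luk t)) / real k - \<mu>)\<^sup>2)
    \<le> real (card (plane_trees k)) * variance_bound (length a) (sum_list a) k"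
proof -
  let ?W = "weak_comps k (k - 1)"
  define N where "N c = real (cyclic_count a c)" for c
  have "1 \<le> k" and "0 < real k"
    using k by simp_all
  have "real k * (\<Sum>t\<in>plane_trees k. (N (luk t) / real k - \<mu>)\<^sup>2) = (\<Sum>c\<in>?W. (N c / real k - \<mu>)\<^sup>2)"
    using sum_plane_trees_eq_sum_tree_words[of "\<lambda>w. (N w / real k - \<mu>)\<^sup>2" k]
      sum_weak_comps_eq_sum_tree_words[OF \<open>1 \<le> k\<close>, of "\<lambda>w. (N w / real k - \<mu>)\<^sup>2"]
    by (simp add: N_def cyclic_count_rotate)
  also have "\<dots> = (\<Sum>c\<in>?W. (N c)\<^sup>2) / (real k)\<^sup>2 - 2 * \<mu> * ((\<Sum>c\<in>?W. N c) / real k)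
      + real (card ?W) * \<mu>\<^sup>2"
    by (simp add: power2_diff sum.distrib sum_subtractf sum_divide_distrib sum_distrib_left
        power_divide ac_simps)
  also have "\<dots> \<le> real (card ?W) * variance_bound (length a) (sum_list a) k"
  proof -
    have "(\<Sum>c\<in>?W. (N c)\<^sup>2) \<le> real k * real (card ?W)
        * (real k * comps_ratio (2 * length a) (2 * sum_list a) k + 2 * real (length a))"
      unfolding N_def using k by (intro sum_cyclic_count_squared_le_comps_ratio) simp_all
    then have "(\<Sum>c\<in>?W. (N c)\<^sup>2) / (real k)\<^sup>2 \<le> real k * real (card ?W)
        * (real k * comps_ratio (2 * length a) (2 * sum_list a) k + 2 * real (length a)) / (real k)\<^sup>2"
      by (rule divide_right_mono) simp
    also have "\<dots> = real (card ?W)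
        * (comps_ratio (2 * length a) (2 * sum_list a) k + 2 * real (length a) / real k)"
      using \<open>0 < real k\<close> by (simp add: power2_eq_square field_simps)
    finally have second_moment: "(\<Sum>c\<in>?W. (N c)\<^sup>2) / (real k)\<^sup>2 \<le> real (card ?W)
        * (comps_ratio (2 * length a) (2 * sum_list a) k + 2 * real (length a) / real k)" .
    have first_moment: "(\<Sum>c\<in>?W. N c) / real k = real (card ?W) * comps_ratio (length a) (sum_list a) k"
      using sum_cyclic_count_eq_comps_ratio[of a k] k \<open>0 < real k\<close> by (simp add: N_def)
    show ?thesis
      unfolding first_moment using second_moment by (simp add: variance_bound_def \<mu>_def algebra_simps)
  qed
  also have "\<dots> = real k * (real (card (plane_trees k)) * variance_bound (length a) (sum_list a) k)"
    using card_weak_comps_eq_card_plane_trees[OF \<open>1 \<le> k\<close>] by simp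
  finally show ?thesis
    using \<open>0 < real k\<close> by (simp add: N_def)
qed

section \<open>Concentration\<close>

lemma card_close_by_second_moment:
  fixes X Y :: "'a \<Rightarrow> real"
  assumes "finite T" and "T \<noteq> {}" and "0 < \<epsilon>"
    and close: "\<And>t. t \<in> T \<Longrightarrow> \<bar>X t - Y t\<bar> < \<epsilon> / 2"
    and second_moment: "(\<Sum>t\<in>T. (Y t - \<mu>)\<^sup>2) \<le> real (card T) * E" and "E < \<epsilon> ^ 3 / 4"
  shows "real (card {t \<in> T. \<bar>X t - \<mu>\<bar> \<le> \<epsilon>}) / real (card T) > 1 - \<epsilon>"
proof -
  define B where "B = {t \<in> T. \<not> \<bar>X t - \<mu>\<bar> \<le> \<epsilon>}"
  have "(\<epsilon> / 2)\<^sup>2 \<le> (Y t - \<mu>)\<^sup>2" if "t \<in> B" for t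
  proof -
    have "\<epsilon> < \<bar>X t - \<mu>\<bar>" and "\<bar>X t - Y t\<bar> < \<epsilon> / 2"
      using that close[of t] by (auto simp: B_def)
    then have "\<epsilon> / 2 \<le> \<bar>Y t - \<mu>\<bar>"
      by linarith
    then show ?thesis
      using power_mono[of "\<epsilon> / 2" "\<bar>Y t - \<mu>\<bar>" 2] \<open>0 < \<epsilon>\<close> by simp
  qed
  then have "real (card B) * (\<epsilon> / 2)\<^sup>2 \<le> (\<Sum>t\<in>B. (Y t - \<mu>)\<^sup>2)"
    using sum_mono[of B "\<lambda>_. (\<epsilon> / 2)\<^sup>2"] by simp
  also have "\<dots> \<le> (\<Sum>t\<in>T. (Y t - \<mu>)\<^sup>2)"
    by (rule sum_mono2) (auto simp: B_def \<open>finite T\<close>)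
  also have "\<dots> < real (card T) * (\<epsilon> ^ 3 / 4)"
  proof -
    have "0 < real (card T)"
      using \<open>finite T\<close> \<open>T \<noteq> {}\<close> by (simp add: card_gt_0_iff)
    then have "real (card T) * E < real (card T) * (\<epsilon> ^ 3 / 4)"
      using \<open>E < \<epsilon> ^ 3 / 4\<close> by (intro mult_strict_left_mono)
    with second_moment show ?thesis
      by linarith
  qed
  finally have "real (card B) < real (card T) * \<epsilon>"
    using \<open>0 < \<epsilon>\<close> by (simp add: power2_eq_square power3_eq_cube field_simps)
  moreover have "card {t \<in> T. \<bar>X t - \<mu>\<bar> \<le> \<epsilon>} + card B = card T"
    using card_Un_disjoint[of "{t \<in> T. \<bar>X t - \<mu>\<bar> \<le> \<epsilon>}" B] \<open>finite T\<close>
    by (simp add: B_def Un_def conj_disj_distribL[symmetric] Int_def)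
  ultimately show ?thesis
    using \<open>finite T\<close> \<open>T \<noteq> {}\<close> by (simp add: field_simps card_gt_0_iff)
qed

lemma rho_close_to_cyclic_count:
  assumes "t \<in> plane_trees k"
  shows "\<bar>rho F t - real (cyclic_count (luk_forest F) (luk t)) / real k\<bar> \<le> real (fsize F + 1) / real k"
proof -
  let ?a = "luk_forest F"
  have "\<bar>real (pattern_count ?a (luk t)) - real (cyclic_count ?a (luk t))\<bar> \<le> real (fsize F + 1)"
    using pattern_count_cyclic_count_bounds[of ?a "luk t"] by (simp add: length_luk_forest)
  then show ?thesis
    unfolding rho_eq_pattern_count[OF assms] diff_divide_distrib[symmetric] abs_divide
    by (simp add: divide_right_mono)
qed

lemma plane_trees_nonempty: "1 \<le> k \<Longrightarrow> plane_trees k \<noteq> {}"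
  using card_weak_comps_eq_card_plane_trees[of k] card_weak_comps_pos[of k] by auto

lemma two_fsize_minus_length_eq:
  "2 * fsize F - length F = length (luk_forest F) + sum_list (luk_forest F)"
proof -
  have "int (sum_list (luk_forest F)) + int (length F) = int (fsize F)"
    using forest_word_luk_forest[of F] by (simp add: forest_word_def excess_eq length_luk_forest)
  then have "sum_list (luk_forest F) + length F = fsize F"
    by linarith
  then show ?thesis
    by (simp add: length_luk_forest)
qed

lemma rho_concentrated:
  fixes F :: "ptree list"
  defines "a \<equiv> luk_forest F"
  assumes "0 < \<epsilon>" and variance: "variance_bound (length a) (sum_list a) k < \<epsilon> ^ 3 / 4"
    and error: "real (fsize F + 1) / real k < \<epsilon> / 2" and k: "2 * length a + 2 * sum_list a + 2 \<le> k"
  shows "real (card {t \<in> plane_trees k. \<bar>rho F t - (1 / 2) ^ (length a + sum_list a)\<bar> \<le> \<epsilon>})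
    / real (card (plane_trees k)) > 1 - \<epsilon>"
proof (rule card_close_by_second_moment)
  show "\<bar>rho F t - real (cyclic_count a (luk t)) / real k\<bar> < \<epsilon> / 2" if "t \<in> plane_trees k" for t
    using rho_close_to_cyclic_count[OF that, of F] error unfolding a_def by linarith
  show "(\<Sum>t\<in>plane_trees k. (real (cyclic_count a (luk t)) / real k - (1 / 2) ^ (length a + sum_list a))\<^sup>2)
      \<le> real (card (plane_trees k)) * variance_bound (length a) (sum_list a) k"
    using k by (rule sum_plane_trees_cyclic_deviation_le)
qed (use k \<open>0 < \<epsilon>\<close> variance in \<open>simp_all add: finite_plane_trees plane_trees_nonempty\<close>)

theorem proposition9:
  fixes F :: "ptree list"
  shows "\<forall>\<epsilon>>0. \<exists>K. \<forall>k\<ge>K.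
    real (card {t \<in> plane_trees k.
        \<bar>rho F t - 1 / 2 ^ (2 * fsize F - length F)\<bar> \<le> \<epsilon>})
      / real (card (plane_trees k)) > 1 - \<epsilon>"
proof (intro allI impI)
  fix \<epsilon> :: real assume "0 < \<epsilon>"
  let ?m = "length (luk_forest F)" and ?s = "sum_list (luk_forest F)"
  have "\<forall>\<^sub>F k in sequentially. variance_bound ?m ?s k < \<epsilon> ^ 3 / 4
      \<and> real (fsize F + 1) / real k < \<epsilon> / 2 \<and> 2 * ?m + 2 * ?s + 2 \<le> k"
    using \<open>0 < \<epsilon>\<close>
    by (intro eventually_conj order_tendstoD(2)[OF variance_bound_tendsto]
        order_tendstoD(2)[OF lim_const_over_n] eventually_ge_at_top) simp_all
  then obtain K where "\<And>k. K \<le> k \<Longrightarrow> variance_bound ?m ?s k < \<epsilon> ^ 3 / 4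
      \<and> real (fsize F + 1) / real k < \<epsilon> / 2 \<and> 2 * ?m + 2 * ?s + 2 \<le> k"
    unfolding eventually_sequentially by blast
  with \<open>0 < \<epsilon>\<close> have "\<forall>k\<ge>K. real (card {t \<in> plane_trees k.
      \<bar>rho F t - (1 / 2) ^ (?m + ?s)\<bar> \<le> \<epsilon>}) / real (card (plane_trees k)) > 1 - \<epsilon>"
    by (blast intro: rho_concentrated)
  then show "\<exists>K. \<forall>k\<ge>K. real (card {t \<in> plane_trees k.
      \<bar>rho F t - 1 / 2 ^ (2 * fsize F - length F)\<bar> \<le> \<epsilon>}) / real (card (plane_trees k)) > 1 - \<epsilon>"
    unfolding two_fsize_minus_length_eq power_one_over by blast
qed

end
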